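(* Let $\mathcal I=\mathbb R^d$ with the standard inner product, let $\mathcal G$ be a compact Abelian group with normalized Haar measure $dg$ acting on $\mathcal I$ by a unitary representation, and let $\mathcal S$ be the unit sphere of $\mathcal I$ with normalized uniform measure $u$. For $I\in\mathcal I$ and $t\in\mathcal S$ let $\mu^t(I)$ be the cumulative distribution function of the law of $g\mapsto\langle I,gt\rangle$ on $(\mathcal G,dg)$, i.e. $\mu^t(I)(b)=\int H(b-\langle I,gt\rangle)\,dg$. Let $d_\infty(f,f')=\sup_{s\in\mathbb R}|f(s)-f'(s)|$ and define $$d(I,I')=\int d_\infty(\mu^t(I),\mu^t(I'))\,du(t),\qquad \widehat d(I,I')=\frac1k\sum_{i=1}^k d_\infty(\mu^{t_i}(I),\mu^{t_i}(I')),$$ where $t_1,\dots,t_k$ are templates drawn independently from $u$. Consider a set $\mathcal I_n$ of $n$ points of $\mathcal I$. There is a constant $c$ such that if $k\ge\frac{2}{c\epsilon^2}\log\frac n\delta$, then with probability $1-\delta^2$, $$|d(I,I')-\widehat d(I,I')|\le\epsilon\quad\text{for all } I,I'\in\mathcal I_n.$$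
   Context: $H$ is the Heaviside step function. *)

theory Defs
  imports "HOL-Probability.Probability"
begin

text \<open>Heaviside step function, with the convention H(0) = 1, so that the
  integral below is the (right-continuous) cumulative distribution function.\<close>
definition heaviside :: "real \<Rightarrow> real" where
  "heaviside x = (if 0 \<le> x then 1 else 0)"

text \<open>Normalized uniform (surface) measure on the unit sphere of a Euclidean space,
  defined as the cone measure: u(A) = vol {r x. x in A, 0 < r \<le> 1} / vol(ball 0 1),
  i.e. the push-forward of the uniform distribution on the unit ball (minus the
  origin) under radial projection x \<mapsto> x / |x|
  (the null point 0 is sent to a fixed basis vector, only for totality).\<close>
definition uniform_sphere :: "'a::euclidean_space measure" where
  "uniform_sphere =
     distr (uniform_measure lborel (ball 0 1 - {0}))
           (restrict_space borel (sphere 0 1))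
           (\<lambda>x. if x = 0 then (SOME b. b \<in> Basis) else x /\<^sub>R norm x)"

definition compact_group_unitary_rep ::
    "'g::{topological_ab_group_add,t2_space} measure \<Rightarrow> ('g \<Rightarrow> 'a::euclidean_space \<Rightarrow> 'a) \<Rightarrow> bool" where
  "compact_group_unitary_rep Hm rho \<longleftrightarrow>
     compact (UNIV :: 'g set) \<and>
     prob_space Hm \<and> sets Hm = sets borel \<and>
     (\<forall>g A. A \<in> sets borel \<longrightarrow> emeasure Hm ((+) g ` A) = emeasure Hm A) \<and>
     (\<forall>g. orthogonal_transformation (rho g)) \<and>
     rho 0 = id \<and> (\<forall>g h. rho (g + h) = rho g \<circ> rho h) \<and>
     (\<forall>x. continuous_on UNIV (\<lambda>g. rho g x))"

definition mu_cdf :: "'g measure \<Rightarrow> ('g \<Rightarrow> 'a::euclidean_space \<Rightarrow> 'a) \<Rightarrow> 'a \<Rightarrow> 'a \<Rightarrow> real \<Rightarrow> real" where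
  "mu_cdf Hm rho t I b = (\<integral>g. heaviside (b - I \<bullet> rho g t) \<partial>Hm)"

definition d_inf :: "(real \<Rightarrow> real) \<Rightarrow> (real \<Rightarrow> real) \<Rightarrow> real" where
  "d_inf f f' = (SUP s. \<bar>f s - f' s\<bar>)"

definition dist_d :: "'g measure \<Rightarrow> ('g \<Rightarrow> 'a::euclidean_space \<Rightarrow> 'a) \<Rightarrow> 'a \<Rightarrow> 'a \<Rightarrow> real" where
  "dist_d Hm rho I I' =
     (\<integral>t. d_inf (mu_cdf Hm rho t I) (mu_cdf Hm rho t I') \<partial>uniform_sphere)"

definition dist_hat :: "'g measure \<Rightarrow> ('g \<Rightarrow> 'a::euclidean_space \<Rightarrow> 'a) \<Rightarrow> nat \<Rightarrow> (nat \<Rightarrow> 'a) \<Rightarrow> 'a \<Rightarrow> 'a \<Rightarrow> real" where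
  "dist_hat Hm rho k ts I I' =
     (1 / real k) * (\<Sum>i<k. d_inf (mu_cdf Hm rho (ts i) I) (mu_cdf Hm rho (ts i) I'))"

end

theory Submission
  imports Defs
begin

text \<open>For fixed \<open>I, I'\<close> the function \<open>t \<mapsto> d\<^sub>\<infinity>(\<mu>\<^sup>t(I), \<mu>\<^sup>t(I'))\<close> on the sphere takes values
  in \<open>[0,1]\<close>; \<open>d(I,I')\<close> is its mean and \<open>d\<^sub>k(I,I')\<close> the empirical mean of \<open>k\<close> independent
  samples.  By Hoeffding's inequality they differ by at least \<open>\<epsilon>\<close> with probability at most
  \<open>2 exp(-2k\<epsilon>\<^sup>2)\<close>, and a union bound over the \<open>n\<^sup>2\<close> pairs gives total failure probability
  \<open>2n\<^sup>2 exp(-2k\<epsilon>\<^sup>2) \<le> \<delta>\<^sup>2\<close> as soon as \<open>k \<ge> (2/\<epsilon>\<^sup>2) log(n/\<delta>)\<close>, so \<open>c = 1\<close> works.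
  The measure-theoretic point is that this function is measurable: each \<open>\<mu>\<^sup>t(I)\<close> is the CDF of
  a push-forward of Haar measure, hence right-continuous, so the supremum defining \<open>d\<^sub>\<infinity>\<close> can
  be taken over the countable set of rationals.\<close>

lemma rational_sequence_from_right:
  fixes s :: real
  obtains q where "\<And>j. q j \<in> \<rat>" "\<And>j. s < q j" "q \<longlonglongrightarrow> s"
proof -
  have "\<forall>j::nat. \<exists>r\<in>\<rat>. s < r \<and> r < s + inverse (real (Suc j))"
    by (auto intro!: Rats_dense_in_real)
  then obtain q where q: "\<And>j. q j \<in> \<rat> \<and> s < q j \<and> q j < s + inverse (real (Suc j))"
    by metis
  have "q \<longlonglongrightarrow> s"
    by (rule tendsto_sandwich[OF _ _ tendsto_const LIMSEQ_inverse_real_of_nat_add])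
       (use q in \<open>auto intro!: always_eventually less_imp_le\<close>)
  with q that show ?thesis by blast
qed

lemma d_inf_self: "d_inf F F = 0"
  by (simp add: d_inf_def)

lemma
  assumes "\<And>s. \<bar>F s - F' s\<bar> \<le> B"
  shows d_inf_nonneg: "0 \<le> d_inf F F'"
    and d_inf_le: "d_inf F F' \<le> B"
proof -
  have bdd: "bdd_above (range (\<lambda>s. \<bar>F s - F' s\<bar>))"
    using assms by (intro bdd_aboveI[where M=B]) auto
  show "0 \<le> d_inf F F'"
    unfolding d_inf_def by (rule order_trans[OF abs_ge_zero cSUP_upper[OF UNIV_I bdd]])
  show "d_inf F F' \<le> B"
    unfolding d_inf_def using assms by (intro cSUP_least) auto
qed

lemma d_inf_eq_SUP_Rats:
  assumes bounded: "\<And>s. \<bar>F s - F' s\<bar> \<le> B"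
    and right_cont: "\<And>s. continuous (at_right s) F" "\<And>s. continuous (at_right s) F'"
  shows "d_inf F F' = (SUP q\<in>\<rat>. \<bar>F q - F' q\<bar>)"
  unfolding d_inf_def
proof (rule antisym)
  have bdd_Rats: "bdd_above ((\<lambda>q. \<bar>F q - F' q\<bar>) ` \<rat>)"
    using bounded by (intro bdd_aboveI[where M=B]) auto
  show "(SUP s. \<bar>F s - F' s\<bar>) \<le> (SUP q\<in>\<rat>. \<bar>F q - F' q\<bar>)"
  proof (rule cSUP_least)
    fix s :: real
    obtain q where q: "\<And>j. q j \<in> \<rat>" "\<And>j. s < q j" "q \<longlonglongrightarrow> s"
      using rational_sequence_from_right[of s] by blast
    have q_right: "filterlim q (at_right s) sequentially"
      using q(2,3) by (auto simp: filterlim_at intro!: always_eventually)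
    have "(\<lambda>j. F (q j)) \<longlonglongrightarrow> F s" "(\<lambda>j. F' (q j)) \<longlonglongrightarrow> F' s"
      using right_cont[of s] unfolding continuous_within
      by (auto intro: filterlim_compose[OF _ q_right])
    then have "(\<lambda>j. \<bar>F (q j) - F' (q j)\<bar>) \<longlonglongrightarrow> \<bar>F s - F' s\<bar>"
      by (intro tendsto_intros)
    moreover have "\<And>j. \<bar>F (q j) - F' (q j)\<bar> \<le> (SUP q\<in>\<rat>. \<bar>F q - F' q\<bar>)"
      using q(1) bdd_Rats by (auto intro: cSUP_upper)
    ultimately show "\<bar>F s - F' s\<bar> \<le> (SUP q\<in>\<rat>. \<bar>F q - F' q\<bar>)"
      by (intro LIMSEQ_le_const2) auto
  qed simp
  have "bdd_above (range (\<lambda>s. \<bar>F s - F' s\<bar>))"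
    using bounded by (intro bdd_aboveI[where M=B]) auto
  then show "(SUP q\<in>\<rat>. \<bar>F q - F' q\<bar>) \<le> (SUP s. \<bar>F s - F' s\<bar>)"
    using Rats_0 by (intro cSUP_least) (auto intro: cSUP_upper)
qed

lemma borel_measurable_heaviside [measurable]: "heaviside \<in> borel_measurable borel"
proof -
  have eq: "heaviside = (\<lambda>x. if 0 \<le> x then 1 else 0)"
    by (simp add: heaviside_def fun_eq_iff)
  show ?thesis
    unfolding eq by measurable
qed

lemma (in prob_space) integral_heaviside_eq_cdf:
  assumes [measurable]: "f \<in> borel_measurable M"
  shows "(\<integral>x. heaviside (b - f x) \<partial>M) = cdf (distr M borel f) b"
proof -
  have "(\<integral>x. heaviside (b - f x) \<partial>M) = (\<integral>x. indicator (f -` {..b} \<inter> space M) x \<partial>M)"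
    by (intro Bochner_Integration.integral_cong) (auto simp: heaviside_def indicator_def)
  also have "\<dots> = measure M (f -` {..b} \<inter> space M)"
    using measurable_sets[OF assms] by (simp add: emeasure_eq_measure)
  also have "\<dots> = cdf (distr M borel f) b"
    by (simp add: cdf_def measure_distr)
  finally show ?thesis .
qed

lemma borel_measurable_linear_family:
  fixes L :: "'g \<Rightarrow> 'a::euclidean_space \<Rightarrow> 'b::euclidean_space"
  assumes "\<And>g. linear (L g)" and [measurable]: "\<And>x. (\<lambda>g. L g x) \<in> borel_measurable M"
  shows "(\<lambda>(t, g). L g t) \<in> borel_measurable (borel \<Otimes>\<^sub>M M)"
proof -
  have "(\<lambda>(t, g). L g t) = (\<lambda>(t, g). \<Sum>e\<in>Basis. (t \<bullet> e) *\<^sub>R L g e)"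
  proof
    fix x :: "'a \<times> 'g"
    obtain t g where x: "x = (t, g)"
      by fastforce
    have "L g t = L g (\<Sum>e\<in>Basis. (t \<bullet> e) *\<^sub>R e)"
      by (simp only: euclidean_representation)
    also have "\<dots> = (\<Sum>e\<in>Basis. (t \<bullet> e) *\<^sub>R L g e)"
      by (simp only: linear_sum[OF assms(1)] linear_scale[OF assms(1)] o_def)
    finally show "(case x of (t, g) \<Rightarrow> L g t) = (case x of (t, g) \<Rightarrow> \<Sum>e\<in>Basis. (t \<bullet> e) *\<^sub>R L g e)"
      unfolding x by simp
  qed
  also have "\<dots> \<in> borel_measurable (borel \<Otimes>\<^sub>M M)"
    by measurable
  finally show ?thesis .
qed

lemma prob_space_uniform_sphere: "prob_space (uniform_sphere :: 'a::euclidean_space measure)"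
proof -
  let ?A = "ball (0::'a) 1 - {0}"
  have "emeasure lborel ?A = emeasure lborel (ball (0::'a) 1)"
    by (rule emeasure_Diff_null_set) (auto simp: null_sets_def emeasure_lborel_singleton)
  then have "prob_space (uniform_measure lborel ?A)"
    by (intro prob_space_uniform_measure) (auto simp: emeasure_ball ennreal_eq_0_iff not_le)
  moreover have "(SOME b. b \<in> (Basis::'a set)) \<in> Basis"
    by (rule someI_ex) (use nonempty_Basis in blast)
  then have "(\<lambda>x. if x = 0 then SOME b. b \<in> Basis else x /\<^sub>R norm x)
      \<in> uniform_measure lborel ?A \<rightarrow>\<^sub>M restrict_space borel (sphere 0 1)"
    by (intro measurable_restrict_space2) (auto simp: measurable_cong_sets[OF sets_uniform_measure])
  ultimately show ?thesis
    unfolding uniform_sphere_def by (rule prob_space.prob_space_distr)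
qed

lemma measurable_uniform_sphere:
  "f \<in> borel \<rightarrow>\<^sub>M N \<Longrightarrow> f \<in> (uniform_sphere :: 'a::euclidean_space measure) \<rightarrow>\<^sub>M N"
proof -
  assume "f \<in> borel \<rightarrow>\<^sub>M N"
  then have "f \<in> restrict_space borel (sphere 0 1) \<rightarrow>\<^sub>M N"
    by (rule measurable_restrict_space1)
  moreover have "sets uniform_sphere = sets (restrict_space borel (sphere (0::'a) 1))"
    by (simp add: uniform_sphere_def)
  ultimately show ?thesis
    using measurable_cong_sets by blast
qed

lemma prob_space_PiM_uniform_sphere: "prob_space (PiM {..<k} (\<lambda>_. uniform_sphere :: 'a::euclidean_space measure))"
  by (rule prob_space_PiM) (simp add: prob_space_uniform_sphere)

lemma indep_vars_PiM_components:
  assumes "finite I" "I \<noteq> {}" "\<And>i. i \<in> I \<Longrightarrow> prob_space (M i)"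
  shows "prob_space.indep_vars (PiM I M) M (\<lambda>i \<omega>. \<omega> i) I"
proof -
  interpret P: prob_space "PiM I M"
    by (rule prob_space_PiM) (use assms in auto)
  show ?thesis
  proof (subst P.indep_vars_iff_distr_eq_PiM')
    have "distr (PiM I M) (PiM I M) (\<lambda>x. \<lambda>i\<in>I. x i) = distr (PiM I M) (PiM I M) (\<lambda>x. x)"
      by (rule distr_cong) (auto simp: space_PiM PiE_def extensional_restrict)
    also have "\<dots> = PiM I (\<lambda>i. distr (PiM I M) (M i) (\<lambda>\<omega>. \<omega> i))"
      by (auto intro!: PiM_cong simp: distr_PiM_component assms(3))
    finally show "distr (PiM I M) (PiM I M) (\<lambda>x. \<lambda>i\<in>I. x i) = PiM I (\<lambda>i. distr (PiM I M) (M i) (\<lambda>\<omega>. \<omega> i))" .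
  qed (use assms(2) in auto)
qed

lemma Hoeffding_PiM_sample_mean:
  fixes Y :: "'a \<Rightarrow> real" and k :: nat and \<epsilon> :: real
  assumes S: "prob_space S" and [measurable]: "Y \<in> borel_measurable S"
    and bounded: "\<And>t. t \<in> space S \<Longrightarrow> Y t \<in> {a..b}" and "a < b" "0 < k" "0 \<le> \<epsilon>"
  shows "measure (PiM {..<k} (\<lambda>_. S))
           {ts \<in> space (PiM {..<k} (\<lambda>_. S)). \<epsilon> \<le> \<bar>(\<Sum>i<k. Y (ts i)) / k - (\<integral>t. Y t \<partial>S)\<bar>}
         \<le> 2 * exp (- 2 * real k * \<epsilon>\<^sup>2 / (b - a)\<^sup>2)"
proof -
  let ?M = "PiM {..<k} (\<lambda>_. S)"
  interpret P: prob_space ?M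
    by (rule prob_space_PiM) (use S in auto)
  have component: "distr ?M S (\<lambda>\<omega>. \<omega> i) = S" if "i \<in> {..<k}" for i
    using that S by (intro distr_PiM_component) auto
  have [measurable]: "(\<lambda>\<omega>. \<omega> i) \<in> ?M \<rightarrow>\<^sub>M S" if "i \<in> {..<k}" for i
    using that by (rule measurable_component_singleton)
  have k0: "0 \<in> {..<k}"
    using \<open>0 < k\<close> by simp
  have distr_Y: "distr ?M borel (\<lambda>\<omega>. Y (\<omega> i)) = distr S borel Y" if "i \<in> {..<k}" for i
    using distr_distr[of Y S borel "\<lambda>\<omega>. \<omega> i" ?M] component that by (simp add: comp_def)
  interpret H: Hoeffding_ineq_iid ?M "{..<k}" "\<lambda>i \<omega>. Y (\<omega> i)" "\<lambda>\<omega>. Y (\<omega> 0)" a b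
    "P.expectation (\<lambda>\<omega>. Y (\<omega> 0))"
  proof unfold_locales
    have "P.indep_vars (\<lambda>_. S) (\<lambda>i \<omega>. \<omega> i) {..<k}"
      using \<open>0 < k\<close> S by (intro indep_vars_PiM_components) auto
    then show "P.indep_vars (\<lambda>_. borel) (\<lambda>i \<omega>. Y (\<omega> i)) {..<k}"
      by (rule P.indep_vars_compose2) simp
    show "distr ?M borel (\<lambda>\<omega>. Y (\<omega> i)) = distr ?M borel (\<lambda>\<omega>. Y (\<omega> 0))" if "i \<in> {..<k}" for i
      using distr_Y[OF that] distr_Y[OF k0] by simp
    show "(\<lambda>\<omega>. Y (\<omega> 0)) \<in> borel_measurable ?M"
      using k0 by simp
    have "Y (\<omega> 0) \<in> {a..b}" if "\<omega> \<in> space ?M" for \<omega>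
      using that k0 by (intro bounded) (auto simp: space_PiM)
    then show "AE \<omega> in ?M. Y (\<omega> 0) \<in> {a..b}"
      by (intro AE_I2)
  qed simp_all
  have "(\<integral>t. Y t \<partial>S) = (\<integral>t. Y t \<partial>distr ?M S (\<lambda>\<omega>. \<omega> 0))"
    using component[OF k0] by simp
  also have "\<dots> = P.expectation (\<lambda>\<omega>. Y (\<omega> 0))"
    using k0 by (intro integral_distr) simp_all
  finally have mean: "P.expectation (\<lambda>\<omega>. Y (\<omega> 0)) = (\<integral>t. Y t \<partial>S)" ..
  have "P.prob {ts \<in> space ?M. \<epsilon> \<le> \<bar>(\<Sum>i\<in>{..<k}. Y (ts i)) / real (card {..<k})
                   - P.expectation (\<lambda>\<omega>. Y (\<omega> 0))\<bar>}
                 \<le> 2 * exp (- 2 * real (card {..<k}) * \<epsilon>\<^sup>2 / (b - a)\<^sup>2)"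
    using \<open>0 < k\<close> by (intro H.Hoeffding_ineq_abs_ge'[OF \<open>0 \<le> \<epsilon>\<close> \<open>a < b\<close>]) auto
  then show ?thesis
    by (simp add: mean)
qed

lemma union_Hoeffding_bound_le:
  fixes n k :: nat and \<epsilon> \<delta> :: real
  assumes "2 \<le> n" "0 < \<epsilon>" "0 < \<delta>" "\<delta> < 1"
    and k: "2 / \<epsilon>\<^sup>2 * ln (real n / \<delta>) \<le> real k"
  shows "real n ^ 2 * (2 * exp (- 2 * real k * \<epsilon>\<^sup>2)) \<le> \<delta>\<^sup>2"
proof -
  have pos: "0 < real n / \<delta>"
    using assms by auto
  have "4 * ln (real n / \<delta>) \<le> 2 * real k * \<epsilon>\<^sup>2"
    using k \<open>0 < \<epsilon>\<close> by (simp add: field_simps)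
  then have "exp (- 2 * real k * \<epsilon>\<^sup>2) \<le> exp (- 4 * ln (real n / \<delta>))"
    by simp
  also have "\<dots> = (real n / \<delta>) powr (- 4)"
    using assms by (simp add: powr_def)
  also have "\<dots> = \<delta> ^ 4 / real n ^ 4"
    using pos by (simp add: powr_minus_divide powr_numeral power_divide)
  finally have "real n ^ 2 * (2 * exp (- 2 * real k * \<epsilon>\<^sup>2)) \<le> real n ^ 2 * (2 * (\<delta> ^ 4 / real n ^ 4))"
    by (intro mult_left_mono) auto
  also have "\<dots> = \<delta>\<^sup>2 * (2 * \<delta>\<^sup>2 / real n ^ 2)"
    using assms by (simp add: field_simps power2_eq_square power4_eq_xxxx)
  also have "\<dots> \<le> \<delta>\<^sup>2 * 1"
  proof (intro mult_left_mono)
    have "2 * \<delta>\<^sup>2 \<le> 2 * 1" and "(2::real) * 2 \<le> real n ^ 2"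
      using assms power_mono[of 2 "real n" 2] by (auto simp: power_le_one)
    then show "2 * \<delta>\<^sup>2 / real n ^ 2 \<le> 1"
      by (simp add: divide_le_eq)
  qed simp
  finally show ?thesis
    by simp
qed

lemma dist_d_self: "dist_d Hm rho I I = 0"
  by (simp add: dist_d_def d_inf_self)

lemma dist_hat_self: "dist_hat Hm rho k ts I I = 0"
  by (simp add: dist_hat_def d_inf_self)

lemma dist_hat_uniform_deviation_card_le_1:
  assumes "finite In" "card In \<le> 1" "0 \<le> \<epsilon>"
  shows "measure (PiM {..<k} (\<lambda>_. uniform_sphere))
           {ts \<in> space (PiM {..<k} (\<lambda>_. uniform_sphere)).
              \<forall>I\<in>In. \<forall>I'\<in>In. \<bar>dist_d Hm rho I I' - dist_hat Hm rho k ts I I'\<bar> \<le> \<epsilon>} = 1"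
    (is "measure ?M ?good = 1")
proof -
  have "\<bar>dist_d Hm rho I I' - dist_hat Hm rho k ts I I'\<bar> \<le> \<epsilon>" if "I \<in> In" "I' \<in> In" for I I' ts
  proof -
    have "I' = I"
      using assms(1,2) that by (auto simp: card_le_Suc0_iff_eq)
    then show ?thesis
      using assms(3) by (simp add: dist_d_self dist_hat_self)
  qed
  then have "?good = space ?M"
    by auto
  then show ?thesis
    using prob_space.prob_space[OF prob_space_PiM_uniform_sphere] by simp
qed

context
  fixes Hm :: "'g::{topological_ab_group_add,t2_space} measure"
    and rho :: "'g \<Rightarrow> 'a::euclidean_space \<Rightarrow> 'a"
  assumes rep: "compact_group_unitary_rep Hm rho"
begin

lemma prob_space_Haar: "prob_space Hm"
  using rep by (simp add: compact_group_unitary_rep_def)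

lemma measurable_orbit [measurable]: "(\<lambda>g. rho g x) \<in> borel_measurable Hm"
proof -
  have "continuous_on UNIV (\<lambda>g. rho g x)" and "sets Hm = sets borel"
    using rep by (simp_all add: compact_group_unitary_rep_def)
  then show ?thesis
    using borel_measurable_continuous_onI measurable_cong_sets by blast
qed

lemma real_distribution_orbit: "real_distribution (distr Hm borel (\<lambda>g. I \<bullet> rho g t))"
  by (simp add: prob_space.real_distribution_distr[OF prob_space_Haar])

lemma mu_cdf_eq_cdf: "mu_cdf Hm rho t I = cdf (distr Hm borel (\<lambda>g. I \<bullet> rho g t))"
  unfolding mu_cdf_def
  by (intro ext prob_space.integral_heaviside_eq_cdf[OF prob_space_Haar]) measurable

lemma borel_measurable_mu_cdf [measurable]: "(\<lambda>t. mu_cdf Hm rho t I b) \<in> borel_measurable borel"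
proof -
  have "linear (rho g)" for g
    using rep by (simp add: compact_group_unitary_rep_def orthogonal_transformation_linear)
  then have [measurable]: "(\<lambda>(t, g). rho g t) \<in> borel_measurable (borel \<Otimes>\<^sub>M Hm)"
    by (rule borel_measurable_linear_family) measurable
  interpret prob_space Hm
    by (rule prob_space_Haar)
  show ?thesis
    unfolding mu_cdf_def by measurable
qed

lemma
  shows mu_cdf_nonneg: "0 \<le> mu_cdf Hm rho t I b"
    and mu_cdf_le_1: "mu_cdf Hm rho t I b \<le> 1"
    and mu_cdf_right_continuous: "continuous (at_right b) (mu_cdf Hm rho t I)"
proof -
  interpret real_distribution "distr Hm borel (\<lambda>g. I \<bullet> rho g t)"
    by (rule real_distribution_orbit)
  show "0 \<le> mu_cdf Hm rho t I b" "mu_cdf Hm rho t I b \<le> 1"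
      "continuous (at_right b) (mu_cdf Hm rho t I)"
    unfolding mu_cdf_eq_cdf by (rule cdf_nonneg cdf_bounded_prob cdf_is_right_cont)+
qed

lemma abs_mu_cdf_diff_le_1: "\<bar>mu_cdf Hm rho t I b - mu_cdf Hm rho t I' b\<bar> \<le> 1"
  using mu_cdf_nonneg[of t I b] mu_cdf_le_1[of t I b] mu_cdf_nonneg[of t I' b] mu_cdf_le_1[of t I' b]
  by linarith

lemma
  shows d_inf_mu_cdf_nonneg: "0 \<le> d_inf (mu_cdf Hm rho t I) (mu_cdf Hm rho t I')"
    and d_inf_mu_cdf_le_1: "d_inf (mu_cdf Hm rho t I) (mu_cdf Hm rho t I') \<le> 1"
    and d_inf_mu_cdf_eq_SUP_Rats:
      "d_inf (mu_cdf Hm rho t I) (mu_cdf Hm rho t I')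
         = (SUP q\<in>\<rat>. \<bar>mu_cdf Hm rho t I q - mu_cdf Hm rho t I' q\<bar>)"
proof -
  have bounded: "\<bar>mu_cdf Hm rho t I s - mu_cdf Hm rho t I' s\<bar> \<le> 1" for s
    by (rule abs_mu_cdf_diff_le_1)
  show "0 \<le> d_inf (mu_cdf Hm rho t I) (mu_cdf Hm rho t I')"
    using bounded by (rule d_inf_nonneg)
  show "d_inf (mu_cdf Hm rho t I) (mu_cdf Hm rho t I') \<le> 1"
    using bounded by (rule d_inf_le)
  show "d_inf (mu_cdf Hm rho t I) (mu_cdf Hm rho t I')
      = (SUP q\<in>\<rat>. \<bar>mu_cdf Hm rho t I q - mu_cdf Hm rho t I' q\<bar>)"
    by (rule d_inf_eq_SUP_Rats[OF bounded mu_cdf_right_continuous mu_cdf_right_continuous])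
qed

lemma borel_measurable_d_inf_mu_cdf:
  "(\<lambda>t. d_inf (mu_cdf Hm rho t I) (mu_cdf Hm rho t I')) \<in> borel_measurable borel"
  unfolding d_inf_mu_cdf_eq_SUP_Rats
proof (rule borel_measurable_cSUP)
  show "bdd_above ((\<lambda>q. \<bar>mu_cdf Hm rho t I q - mu_cdf Hm rho t I' q\<bar>) ` \<rat>)" for t
    using abs_mu_cdf_diff_le_1 by (intro bdd_aboveI[where M=1]) auto
qed (auto simp: countable_rat)

lemma dist_hat_uniform_deviation:
  assumes "finite In" "0 < k" "0 \<le> \<epsilon>"
  shows "1 - real (card In) ^ 2 * (2 * exp (- 2 * real k * \<epsilon>\<^sup>2))
    \<le> measure (PiM {..<k} (\<lambda>_. uniform_sphere))
        {ts \<in> space (PiM {..<k} (\<lambda>_. uniform_sphere)).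
           \<forall>I\<in>In. \<forall>I'\<in>In. \<bar>dist_d Hm rho I I' - dist_hat Hm rho k ts I I'\<bar> \<le> \<epsilon>}"
    (is "_ \<le> measure ?M ?good")
proof -
  define Y where "Y p t = d_inf (mu_cdf Hm rho t (fst p)) (mu_cdf Hm rho t (snd p))" for p t
  define bad where "bad p = {ts \<in> space ?M.
      \<epsilon> \<le> \<bar>(\<Sum>i<k. Y p (ts i)) / real k - (\<integral>t. Y p t \<partial>uniform_sphere)\<bar>}" for p
  interpret P: prob_space ?M
    by (rule prob_space_PiM_uniform_sphere)
  have [measurable]: "(\<lambda>t. d_inf (mu_cdf Hm rho t I) (mu_cdf Hm rho t I'))
      \<in> borel_measurable uniform_sphere" for I I'
    by (intro measurable_uniform_sphere borel_measurable_d_inf_mu_cdf)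
  then have [measurable]: "Y p \<in> borel_measurable uniform_sphere" for p
    unfolding Y_def .
  have bad_sets: "bad p \<in> sets ?M" for p
    unfolding bad_def by measurable
  have bad_prob: "measure ?M (bad p) \<le> 2 * exp (- 2 * real k * \<epsilon>\<^sup>2)" for p
    using Hoeffding_PiM_sample_mean[of uniform_sphere "Y p" 0 1 k \<epsilon>] assms
    by (simp add: bad_def Y_def prob_space_uniform_sphere d_inf_mu_cdf_nonneg d_inf_mu_cdf_le_1)
  have "measure ?M (\<Union>p\<in>In \<times> In. bad p) \<le> (\<Sum>p\<in>In \<times> In. measure ?M (bad p))"
    using assms(1) bad_sets by (intro P.finite_measure_subadditive_finite) auto
  also have "\<dots> \<le> (\<Sum>p\<in>In \<times> In. 2 * exp (- 2 * real k * \<epsilon>\<^sup>2))"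
    by (intro sum_mono bad_prob)
  also have "\<dots> = real (card In) ^ 2 * (2 * exp (- 2 * real k * \<epsilon>\<^sup>2))"
    by (simp add: card_cartesian_product power2_eq_square)
  finally have "1 - real (card In) ^ 2 * (2 * exp (- 2 * real k * \<epsilon>\<^sup>2))
      \<le> measure ?M (space ?M - (\<Union>p\<in>In \<times> In. bad p))"
    using assms(1) bad_sets by (subst P.prob_compl) auto
  also have "\<dots> \<le> measure ?M ?good"
  proof (rule P.finite_measure_mono)
    show "space ?M - (\<Union>p\<in>In \<times> In. bad p) \<subseteq> ?good"
      by (auto simp: bad_def Y_def dist_d_def dist_hat_def not_le)
    show "?good \<in> sets ?M"
      using assms(1) unfolding dist_d_def dist_hat_def by measurable
  qed
  finally show ?thesis .
qed

end

theorem theorem6: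
  "\<exists>c::real. c > 0 \<and>
     (\<forall>(Hm :: 'g::{topological_ab_group_add,t2_space} measure) (rho :: 'g \<Rightarrow> 'a::euclidean_space \<Rightarrow> 'a)
        (In :: 'a set) (n::nat) (k::nat) (\<epsilon>::real) (\<delta>::real).
        compact_group_unitary_rep Hm rho \<longrightarrow> finite In \<longrightarrow> card In = n \<longrightarrow>
        0 < \<epsilon> \<longrightarrow> 0 < \<delta> \<longrightarrow> \<delta> < 1 \<longrightarrow>
        real k \<ge> 2 / (c * \<epsilon>\<^sup>2) * ln (real n / \<delta>) \<longrightarrow>
        measure (PiM {..<k} (\<lambda>_. uniform_sphere))
          {ts \<in> space (PiM {..<k} (\<lambda>_. uniform_sphere)).
             \<forall>I\<in>In. \<forall>I'\<in>In. \<bar>dist_d Hm rho I I' - dist_hat Hm rho k ts I I'\<bar> \<le> \<epsilon>}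
          \<ge> 1 - \<delta>\<^sup>2)"
proof (intro exI[of _ 1] conjI allI impI)
  show "(0::real) < 1"
    by simp
  fix Hm :: "'g::{topological_ab_group_add,t2_space} measure" and rho :: "'g \<Rightarrow> 'a::euclidean_space \<Rightarrow> 'a"
    and In :: "'a set" and n k :: nat and \<epsilon> \<delta> :: real
  assume rep: "compact_group_unitary_rep Hm rho" and fin: "finite In" and card: "card In = n"
    and "0 < \<epsilon>" "0 < \<delta>" "\<delta> < 1" and k: "2 / (1 * \<epsilon>\<^sup>2) * ln (real n / \<delta>) \<le> real k"
  let ?M = "PiM {..<k} (\<lambda>_. uniform_sphere :: 'a measure)"
  let ?good = "{ts \<in> space ?M. \<forall>I\<in>In. \<forall>I'\<in>In. \<bar>dist_d Hm rho I I' - dist_hat Hm rho k ts I I'\<bar> \<le> \<epsilon>}"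
  show "1 - \<delta>\<^sup>2 \<le> measure ?M ?good"
  proof (cases "n \<le> 1")
    case True
    then have "measure ?M ?good = 1"
      using card \<open>0 < \<epsilon>\<close> by (intro dist_hat_uniform_deviation_card_le_1[OF fin]) auto
    then show ?thesis
      by simp
  next
    case False
    then have "0 < 2 / (1 * \<epsilon>\<^sup>2) * ln (real n / \<delta>)"
      using \<open>0 < \<epsilon>\<close> \<open>0 < \<delta>\<close> \<open>\<delta> < 1\<close> by (simp add: field_simps)
    with k have "0 < k"
      by simp
    have "1 - \<delta>\<^sup>2 \<le> 1 - real n ^ 2 * (2 * exp (- 2 * real k * \<epsilon>\<^sup>2))"
      using union_Hoeffding_bound_le[of n \<epsilon> \<delta> k] False \<open>0 < \<epsilon>\<close> \<open>0 < \<delta>\<close> \<open>\<delta> < 1\<close> k by simp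
    also have "\<dots> \<le> measure ?M ?good"
      using dist_hat_uniform_deviation[OF rep fin \<open>0 < k\<close>] card \<open>0 < \<epsilon>\<close> by simp
    finally show ?thesis .
  qed
qed

end
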